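(* With $S_1,S_2$ as in the context, $$S_1(q)=(-q^3;q^3)_\infty \sum_{i,j\geq 0} \frac{q^{\frac{1}{2}i^2+2ij+2j^2-\frac{1}{2}i+2j}}{(q^3;q^3)_i(q^6;q^6)_j},\qquad S_2(q)=(-q^3;q^3)_\infty \sum_{i,j\geq 0} \frac{q^{\frac{1}{2}i^2+2ij+2j^2+\frac{3}{2}i}}{(q^3;q^3)_i(q^6;q^6)_j}.$$
   Context: Let $|q|<1$ and use standard $q$-Pochhammer notation $(a;q)_n=\prod_{k=0}^{n-1}(1-aq^k)$, $(a;q)_\infty=\prod_{k\ge0}(1-aq^k)$. Define $$S_1(q)=\sum_{i,j\geq 0}\frac{q^{\frac{1}{2}i^2-ij+2j^2-\frac{1}{2}i+2j}}{(q^3;q^3)_i(q^3;q^3)_j},\qquad S_2(q)=\sum_{i,j\geq 0}\frac{q^{\frac{1}{2}i^2-ij+2j^2+\frac{3}{2}i}}{(q^3;q^3)_i (q^3;q^3)_j}.$$ *)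

theory Defs
  imports "HOL-Analysis.Analysis"
begin

definition qpoch :: "complex \<Rightarrow> complex \<Rightarrow> nat \<Rightarrow> complex" where
  "qpoch a q n = (\<Prod>k<n. 1 - a * q ^ k)"

definition qpoch_inf :: "complex \<Rightarrow> complex \<Rightarrow> complex" where
  "qpoch_inf a q = (\<Prod>k. 1 - a * q ^ k)"

text \<open>Exponents, written with integer arithmetic:
  i^2/2 - i j + 2 j^2 - i/2 + 2j  =  i(i-1)/2 - i j + 2 j^2 + 2 j, etc.\<close>

definition S1 :: "complex \<Rightarrow> complex" where
  "S1 q = (\<Sum>\<^sub>\<infinity>(i,j)\<in>UNIV.
     q powi ((int i * (int i - 1)) div 2 - int i * int j + 2 * (int j)^2 + 2 * int j)
     / (qpoch (q^3) (q^3) i * qpoch (q^3) (q^3) j))"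

definition S2 :: "complex \<Rightarrow> complex" where
  "S2 q = (\<Sum>\<^sub>\<infinity>(i,j)\<in>UNIV.
     q powi ((int i * (int i + 3)) div 2 - int i * int j + 2 * (int j)^2)
     / (qpoch (q^3) (q^3) i * qpoch (q^3) (q^3) j))"

end

theory Submission
  imports Defs
begin

text \<open>
  Put \<open>x = q^3\<close>. Since \<open>(x^2;x^2)_j = (x;x)_j (-x;x)_j\<close>, Euler's identity
  \<open>(-xz;x)_\<infinity> = \<Sum>_k x^(k(k+1)/2) z^k / (x;x)_k\<close> at \<open>z = x^j\<close> turns each right-hand side
  into an absolutely convergent triple sum over \<open>(i, j, k)\<close>. Regrouping it along
  \<open>a = i + k\<close>, \<open>b = j + k\<close>, the exponents combine so that the inner finite sum is the
  Durfee rectangle identity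
  \<open>\<Sum>_k x^((a-k)(b-k)) / ((x;x)_(a-k) (x;x)_(b-k) (x;x)_k) = 1 / ((x;x)_a (x;x)_b)\<close>,
  which leaves exactly the double sum defining \<open>S1\<close> resp. \<open>S2\<close>.
\<close>

section \<open>q-Pochhammer symbols\<close>

lemma qpoch_0 [simp]: "qpoch a q 0 = 1"
  by (simp add: qpoch_def)

lemma qpoch_Suc: "qpoch a q (Suc n) = qpoch a q n * (1 - a * q ^ n)"
  by (simp add: qpoch_def)

lemma qpoch_same_Suc: "qpoch x x (Suc n) = qpoch x x n * (1 - x ^ Suc n)"
  by (simp add: qpoch_Suc)

lemma power_Suc_neq_one:
  fixes x :: complex
  assumes "norm x < 1"
  shows "x ^ Suc n \<noteq> 1"
proof -
  have "norm (x ^ Suc n) < 1"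
    using assms by (simp add: norm_power power_less_one_iff del: power_Suc)
  then show ?thesis by auto
qed

lemma qpoch_same_nonzero:
  assumes "\<And>n. x ^ Suc n \<noteq> 1"
  shows "qpoch x x n \<noteq> 0"
  using assms by (induction n) (simp_all add: qpoch_same_Suc)

lemma qpoch_nonzero:
  fixes a x :: complex
  assumes "norm a < 1" "norm x \<le> 1"
  shows "qpoch a x n \<noteq> 0"
proof -
  have "norm (a * x ^ k) < 1" for k
  proof -
    have "norm a * norm x ^ k \<le> norm a"
      using assms by (simp add: mult_left_le power_le_one)
    then show ?thesis
      using assms by (simp add: norm_mult norm_power)
  qed
  then have "1 - a * x ^ k \<noteq> 0" for k
    by (metis norm_one right_minus_eq less_irrefl)
  then show ?thesis
    by (simp add: qpoch_def)
qed

lemma qpoch_square: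
  "qpoch (x^2) (x^2) n = qpoch x x n * qpoch (- x) x n"
  unfolding qpoch_def prod.distrib[symmetric]
  by (intro prod.cong refl) (simp add: algebra_simps power2_eq_square power_mult_distrib)

lemma norm_qpoch_same_ge:
  fixes x :: complex
  assumes "norm x < 1"
  shows "(1 - norm x) ^ n \<le> norm (qpoch x x n)"
proof -
  have "1 - norm x \<le> norm (1 - x * x ^ k)" for k
  proof -
    have "norm (x * x ^ k) \<le> norm x"
      using assms by (simp add: norm_mult norm_power mult_left_le power_le_one)
    then show ?thesis
      using norm_triangle_ineq2[of 1 "x * x ^ k"] by simp
  qed
  then have "(\<Prod>k<n. 1 - norm x) \<le> (\<Prod>k<n. norm (1 - x * x ^ k))"
    using assms by (intro prod_mono) simp
  then show ?thesis
    by (simp add: qpoch_def prod_norm)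
qed

lemma norm_inverse_qpoch_same_le:
  fixes x :: complex
  assumes "norm x < 1"
  shows "norm (1 / qpoch x x n) \<le> (1 / (1 - norm x)) ^ n"
proof -
  have pos: "0 < (1 - norm x) ^ n"
    using assms by simp
  moreover have "0 < norm (qpoch x x n)"
    using pos norm_qpoch_same_ge[OF assms] by (rule less_le_trans)
  ultimately have "1 / norm (qpoch x x n) \<le> 1 / (1 - norm x) ^ n"
    using norm_qpoch_same_ge[OF assms] by (intro divide_left_mono) auto
  then show ?thesis
    by (simp add: norm_divide power_one_over)
qed

section \<open>The Durfee rectangle identity\<close>

text \<open>
  Multiplied by \<open>(x;x)_a\<close>, the summands of the identity satisfy a Pascal-type recurrence
  in \<open>a\<close> and \<open>b\<close>. They are set to zero for \<open>k > b\<close>, so that summing over \<open>k \<le> a\<close>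
  amounts to summing over \<open>k \<le> min a b\<close>.
\<close>

definition durfee_term :: "complex \<Rightarrow> nat \<Rightarrow> nat \<Rightarrow> nat \<Rightarrow> complex" where
  "durfee_term x a b k = (if k \<le> b then x ^ ((a - k) * (b - k)) * qpoch x x a /
      (qpoch x x (a - k) * qpoch x x (b - k) * qpoch x x k) else 0)"

lemma durfee_term_Suc_Suc_Suc:
  assumes x: "\<And>n. x ^ Suc n \<noteq> 1"
  shows "durfee_term x (Suc (k + Suc m)) (Suc (k + d)) (Suc k) =
     x ^ Suc (k + d) * durfee_term x (k + Suc m) (Suc (k + d)) (Suc k)
     + durfee_term x (k + Suc m) (k + d) k"
proof -
  define a where "a = k + Suc m"
  define P where "P = qpoch x x"
  have nz: "P n \<noteq> 0" for n
    unfolding P_def by (rule qpoch_same_nonzero[OF x])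
  have X: "1 - x ^ Suc k \<noteq> 0" and Y: "1 - x ^ Suc m \<noteq> 0"
    using x by (metis right_minus_eq)+
  have lhs: "durfee_term x (Suc a) (Suc (k + d)) (Suc k) = x ^ (m * d) * x ^ d *
      (P a * (1 - x ^ Suc k * x ^ Suc m)) / (P m * P d * (1 - x ^ Suc m) * (P k * (1 - x ^ Suc k)))"
    unfolding durfee_term_def P_def a_def
    by (simp add: qpoch_same_Suc power_add[symmetric] ac_simps)
  have rhs1: "durfee_term x a (Suc (k + d)) (Suc k) =
      x ^ (m * d) * P a / (P m * P d * (P k * (1 - x ^ Suc k)))"
    unfolding durfee_term_def P_def a_def by (simp add: qpoch_same_Suc ac_simps)
  have rhs2: "durfee_term x a (k + d) k =
      x ^ (m * d) * x ^ d * P a / (P m * P d * (1 - x ^ Suc m) * P k)"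
    unfolding durfee_term_def P_def a_def
    by (simp add: qpoch_same_Suc power_add[symmetric] ac_simps)
  have partial_fractions: "E * D * (A * (1 - X * Y)) / (B * (1 - Y) * (C * (1 - X))) =
      X * D * (E * A / (B * (C * (1 - X)))) + E * D * A / (B * (1 - Y) * C)"
    if "B \<noteq> 0" "C \<noteq> 0" "1 - X \<noteq> 0" "1 - Y \<noteq> 0" for A B C D E X Y :: complex
  proof -
    have "X * D * (E * A / (B * (C * (1 - X)))) + E * D * A / (B * (1 - Y) * C) =
        E * D * (A * (X * (1 - Y) + (1 - X))) / (B * (1 - Y) * (C * (1 - X)))"
      using that by (simp add: divide_simps) (simp add: algebra_simps)
    then show ?thesis
      by (simp add: algebra_simps)
  qed
  have power_split: "x ^ Suc (k + d) = x ^ Suc k * x ^ d"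
    by (simp add: power_add[symmetric])
  show ?thesis
    unfolding a_def[symmetric] lhs rhs1 rhs2 power_split
    by (rule partial_fractions) (use nz X Y in simp_all)
qed

lemma durfee_term_Suc_Suc:
  assumes x: "\<And>n. x ^ Suc n \<noteq> 1" and k: "k \<le> Suc a"
  shows "durfee_term x (Suc a) (Suc b) k =
    (if k \<le> a then x ^ Suc b * durfee_term x a (Suc b) k else 0)
    + (if k = 0 then 0 else durfee_term x a b (k - 1))"
proof -
  have nz: "qpoch x x n \<noteq> 0" for n
    by (rule qpoch_same_nonzero[OF x])
  consider "k = 0" | k' where "k = Suc k'" "b < k'" | "k = Suc a" "a \<le> b"
    | k' where "k = Suc k'" "k' \<le> b" "k' < a"
    using k by (cases k) (auto simp: not_le le_less, (meson linorder_neqE_nat)+)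
  then show ?thesis
  proof cases
    case 1
    have "x ^ (Suc a * Suc b) = x ^ Suc b * x ^ (a * Suc b)"
      by (simp only: mult_Suc power_add)
    then show ?thesis
      using nz by (simp add: 1 durfee_term_def del: mult_Suc mult_Suc_right)
  next
    case 2
    then show ?thesis by (simp add: durfee_term_def)
  next
    case 3
    then show ?thesis using nz by (simp add: durfee_term_def)
  next
    case 4
    then obtain m d where "a = k' + Suc m" "b = k' + d"
      by (metis le_Suc_ex less_iff_Suc_add add_Suc_right)
    then show ?thesis
      using 4 durfee_term_Suc_Suc_Suc[OF x, of k' m d] by simp
  qed
qed

lemma sum_durfee_term:
  assumes x: "\<And>n. x ^ Suc n \<noteq> 1"
  shows "(\<Sum>k\<le>a. durfee_term x a b k) = 1 / qpoch x x b"
proof (induction a arbitrary: b)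
  case 0
  then show ?case
    using qpoch_same_nonzero[OF x] by (simp add: durfee_term_def)
next
  case (Suc a)
  have nz: "qpoch x x n \<noteq> 0" for n
    by (rule qpoch_same_nonzero[OF x])
  show ?case
  proof (cases b)
    case 0
    then show ?thesis
      using nz by (simp add: sum.atMost_Suc_shift durfee_term_def del: sum.atMost_Suc)
  next
    case (Suc b')
    have "(\<Sum>k\<le>Suc a. durfee_term x (Suc a) (Suc b') k) =
        (\<Sum>k\<le>Suc a. if k \<le> a then x ^ Suc b' * durfee_term x a (Suc b') k else 0)
        + (\<Sum>k\<le>Suc a. if k = 0 then 0 else durfee_term x a b' (k - 1))"
      by (simp add: durfee_term_Suc_Suc[OF x] sum.distrib)
    also have "\<dots> = x ^ Suc b' * (\<Sum>k\<le>a. durfee_term x a (Suc b') k)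
        + (\<Sum>k\<le>a. durfee_term x a b' k)"
    proof -
      have "(\<Sum>k\<le>Suc a. if k = 0 then 0 else durfee_term x a b' (k - 1))
          = (\<Sum>k\<le>a. durfee_term x a b' k)"
        by (subst sum.atMost_Suc_shift) simp
      then show ?thesis
        by (simp add: sum_distrib_left)
    qed
    also have "\<dots> = x ^ Suc b' / qpoch x x (Suc b') + 1 / qpoch x x b'"
      by (simp add: Suc.IH)
    also have "\<dots> = 1 / qpoch x x (Suc b')"
      using nz[of b'] x[of b'] by (simp add: qpoch_same_Suc field_simps)
    finally show ?thesis
      using Suc by simp
  qed
qed

lemma durfee_identity:
  assumes x: "\<And>n. x ^ Suc n \<noteq> 1"
  shows "(\<Sum>k\<le>min a b. x ^ ((a - k) * (b - k)) / (qpoch x x (a - k) * qpoch x x (b - k) * qpoch x x k))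
     = 1 / (qpoch x x a * qpoch x x b)"
proof -
  have nz: "qpoch x x n \<noteq> 0" for n
    by (rule qpoch_same_nonzero[OF x])
  have "(\<Sum>k\<le>min a b. x ^ ((a - k) * (b - k)) / (qpoch x x (a - k) * qpoch x x (b - k) * qpoch x x k))
      = (\<Sum>k\<le>a. durfee_term x a b k) / qpoch x x a"
    unfolding sum_divide_distrib
    by (rule sum.mono_neutral_cong_left) (auto simp: durfee_term_def nz)
  then show ?thesis
    by (simp add: sum_durfee_term[OF x])
qed

section \<open>Euler's identity\<close>

definition tri :: "nat \<Rightarrow> nat" where
  "tri n = (\<Sum>i<n. i)"

lemma tri_0 [simp]: "tri 0 = 0"
  by (simp add: tri_def)

lemma tri_Suc: "tri (Suc n) = tri n + n"
  by (simp add: tri_def)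

lemma tri_add: "tri (m + n) = tri m + tri n + m * n"
  by (induction n) (simp_all add: tri_Suc)

lemma two_tri: "2 * int (tri n) = int n * (int n - 1)"
  by (induction n) (simp_all add: tri_Suc algebra_simps)

lemma summable_power_tri_mult_power:
  fixes r C :: real
  assumes "0 \<le> r" "r < 1" "0 \<le> C"
  shows "summable (\<lambda>n. r ^ tri n * C ^ n)"
proof -
  have "(\<lambda>n. r ^ n * C) \<longlonglongrightarrow> 0 * C"
    using assms by (intro tendsto_intros) simp
  then have "eventually (\<lambda>n. r ^ n * C < 1/2) sequentially"
    by (rule order_tendstoD) simp
  then obtain N where N: "\<And>n. n \<ge> N \<Longrightarrow> r ^ n * C < 1/2"
    by (auto simp: eventually_sequentially)
  show ?thesis
  proof (rule summable_ratio_test[of "1/2" N])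
    fix n assume "n \<ge> N"
    then have "r ^ n * C < 1/2"
      by (rule N)
    then have "(r ^ n * C) * (r ^ tri n * C ^ n) \<le> 1/2 * (r ^ tri n * C ^ n)"
      using assms by (intro mult_right_mono) auto
    then show "norm (r ^ tri (Suc n) * C ^ Suc n) \<le> 1/2 * norm (r ^ tri n * C ^ n)"
      using assms by (simp add: tri_Suc power_add mult_ac)
  qed simp
qed

definition euler_series :: "complex \<Rightarrow> complex \<Rightarrow> complex" where
  "euler_series x z = (\<Sum>n. x ^ tri (Suc n) / qpoch x x n * z ^ n)"

lemma norm_euler_term_le:
  fixes x z :: complex
  assumes "norm x < 1"
  shows "norm (x ^ tri (Suc n) / qpoch x x n * z ^ n) \<le> norm x ^ tri n * (norm z / (1 - norm x)) ^ n"
proof -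
  have "norm (x ^ tri (Suc n) / qpoch x x n * z ^ n) =
      norm x ^ tri n * norm x ^ n * norm (1 / qpoch x x n) * norm z ^ n"
    by (simp add: norm_mult norm_divide norm_power tri_Suc power_add)
  also have "\<dots> \<le> norm x ^ tri n * 1 * (1 / (1 - norm x)) ^ n * norm z ^ n"
    using assms norm_inverse_qpoch_same_le[OF assms, of n]
    by (intro mult_right_mono mult_mono power_le_one) auto
  finally show ?thesis
    by (simp add: power_divide)
qed

lemma summable_norm_euler_term:
  fixes x z :: complex
  assumes "norm x < 1"
  shows "summable (\<lambda>n. norm (x ^ tri (Suc n) / qpoch x x n * z ^ n))"
  using assms norm_euler_term_le[OF assms]
  by (intro summable_comparison_test[OF _ summable_power_tri_mult_power]) auto

lemma euler_series_functional_equation: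
  fixes x z :: complex
  assumes x: "norm x < 1"
  shows "euler_series x z = (1 + x * z) * euler_series x (x * z)"
proof -
  define c where "c n = x ^ tri (Suc n) / qpoch x x n" for n
  have summable: "summable (\<lambda>n. c n * w ^ n)" for w
    unfolding c_def using summable_norm_euler_term[OF x] by (rule summable_norm_cancel)
  define d where "d n = c n * z ^ n - c n * (x * z) ^ n" for n
  have "d (Suc n) = x * z * (c n * (x * z) ^ n)" for n
  proof -
    have "1 - x ^ Suc n \<noteq> 0"
      using power_Suc_neq_one[OF x] by simp
    then have "c (Suc n) * (1 - x ^ Suc n) = x ^ tri (Suc (Suc n)) / qpoch x x n"
      by (simp add: c_def qpoch_same_Suc)
    moreover have "d (Suc n) = c (Suc n) * (1 - x ^ Suc n) * z ^ Suc n"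
      by (simp add: d_def power_mult_distrib algebra_simps)
    ultimately show ?thesis
      by (simp add: c_def tri_Suc power_add power_mult_distrib mult_ac)
  qed
  then have "(\<lambda>n. d (Suc n)) sums (x * z * euler_series x (x * z))"
    unfolding euler_series_def c_def[symmetric] by (simp add: sums_mult summable summable_sums)
  then have "d sums (x * z * euler_series x (x * z))"
    using sums_Suc_iff[of d] by (simp add: d_def)
  moreover have "d sums (euler_series x z - euler_series x (x * z))"
    unfolding euler_series_def c_def[symmetric] d_def by (intro sums_diff summable_sums summable)
  ultimately have "euler_series x z - euler_series x (x * z) = x * z * euler_series x (x * z)"
    by (rule sums_unique2[symmetric])
  then show ?thesis
    by (simp add: algebra_simps)
qed

lemma euler_series_shift:
  fixes x z :: complex
  assumes x: "norm x < 1"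
  shows "euler_series x z = qpoch (- (x * z)) x j * euler_series x (x ^ j * z)"
proof (induction j)
  case (Suc j)
  have "euler_series x (x ^ j * z) = (1 + x * z * x ^ j) * euler_series x (x ^ Suc j * z)"
    using euler_series_functional_equation[OF x, of "x ^ j * z"] by (simp add: mult_ac)
  then show ?case
    using Suc by (simp add: qpoch_Suc)
qed simp

lemma euler_series_zero [simp]: "euler_series x 0 = 1"
  unfolding euler_series_def using powser_zero[of "\<lambda>n. x ^ tri (Suc n) / qpoch x x n"]
  by (simp add: tri_def)

lemma euler_series_shift_tendsto:
  fixes x z :: complex
  assumes x: "norm x < 1"
  shows "(\<lambda>j. euler_series x (x ^ j * z)) \<longlonglongrightarrow> 1"
proof -
  have "isCont (euler_series x) 0"
    unfolding euler_series_def
    by (rule isCont_powser[of _ 1]) (use summable_norm_cancel[OF summable_norm_euler_term[OF x, of 1]] in auto)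
  moreover have "(\<lambda>j. x ^ j * z) \<longlonglongrightarrow> 0"
    using LIMSEQ_power_zero[OF x] tendsto_mult_left_zero by blast
  ultimately show ?thesis
    using isCont_tendsto_compose by fastforce
qed

lemma euler_product:
  fixes x z :: complex
  assumes x: "norm x < 1" and z: "norm z \<le> 1"
  shows "qpoch_inf (- (x * z)) x = euler_series x z"
proof -
  have small: "norm (- (x * z)) < 1"
    using x z mult_left_le[OF z, of "norm x"] by (simp add: norm_mult)
  have partial_nonzero: "qpoch (- (x * z)) x j \<noteq> 0" for j
    using qpoch_nonzero[OF small] x by simp
  have ev: "eventually (\<lambda>j. euler_series x (x ^ j * z) \<noteq> 0) sequentially"
    using tendsto_imp_eventually_ne[OF euler_series_shift_tendsto[OF x]] by simp
  then obtain J where "euler_series x (x ^ J * z) \<noteq> 0"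
    by (auto simp: eventually_sequentially)
  then have nonzero: "euler_series x z \<noteq> 0"
    using euler_series_shift[OF x, of z J] partial_nonzero by simp
  have "eventually (\<lambda>j. euler_series x z / euler_series x (x ^ j * z) = qpoch (- (x * z)) x j) sequentially"
  proof (rule eventually_mono[OF ev])
    fix j
    assume "euler_series x (x ^ j * z) \<noteq> 0"
    then show "euler_series x z / euler_series x (x ^ j * z) = qpoch (- (x * z)) x j"
      using euler_series_shift[OF x, of z j] by simp
  qed
  moreover have "(\<lambda>j. euler_series x z / euler_series x (x ^ j * z)) \<longlonglongrightarrow> euler_series x z / 1"
    by (intro tendsto_intros euler_series_shift_tendsto[OF x]) simp
  ultimately have "(\<lambda>j. qpoch (- (x * z)) x j) \<longlonglongrightarrow> euler_series x z"
    by (simp add: Lim_transform_eventually)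
  then have "(\<lambda>n. \<Prod>k\<le>n. 1 - - (x * z) * x ^ k) \<longlonglongrightarrow> euler_series x z"
    using LIMSEQ_Suc by (fastforce simp: qpoch_def lessThan_Suc_atMost)
  then have "(\<lambda>k. 1 - - (x * z) * x ^ k) has_prod euler_series x z"
    using nonzero by (simp add: has_prod_def raw_has_prod_def)
  then show ?thesis
    unfolding qpoch_inf_def by (rule has_prod_unique[symmetric])
qed

section \<open>The transformation formula\<close>

lemma summable_on_product_nonneg:
  fixes f :: "'a \<Rightarrow> real" and g :: "'b \<Rightarrow> real"
  assumes "f summable_on A" "g summable_on B" "\<And>a. 0 \<le> f a" "\<And>b. 0 \<le> g b"
  shows "(\<lambda>(a, b). f a * g b) summable_on A \<times> B"
proof (rule summable_on_SigmaI[where g = "\<lambda>a. f a * infsum g B"])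
  show "((\<lambda>b. case (a, b) of (a, b) \<Rightarrow> f a * g b) has_sum f a * infsum g B) B" for a
    using has_sum_cmult_right[OF has_sum_infsum[OF assms(2)], of "f a"] by simp
  show "(\<lambda>a. f a * infsum g B) summable_on A"
    using summable_on_cmult_left[OF assms(1)] by simp
qed (use assms in auto)

text \<open>
  Summing over \<open>k\<close> (Euler) yields the right-hand side of the transformation, summing over
  the diagonals \<open>(a, b) = (i + k, j + k)\<close> (Durfee) yields the left-hand side.
\<close>

definition transformation_term ::
    "complex \<Rightarrow> nat \<Rightarrow> (nat \<Rightarrow> nat \<Rightarrow> int) \<Rightarrow> (nat \<times> nat) \<times> nat \<Rightarrow> complex" where
  "transformation_term q m e = (\<lambda>((i, j), k). q ^ nat (e i j) * (q ^ m) ^ (tri (Suc k) + j * k) /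
      (qpoch (q ^ m) (q ^ m) i * qpoch (q ^ m) (q ^ m) j * qpoch (q ^ m) (q ^ m) k))"

lemma norm_transformation_term_le:
  fixes q :: complex
  assumes q: "norm q < 1" and m: "0 < m" and e: "int (tri i + tri j) \<le> e i j"
  defines "M \<equiv> \<lambda>n. norm q ^ tri n * (1 / (1 - norm (q ^ m))) ^ n"
  shows "norm (transformation_term q m e ((i, j), k)) \<le> M i * M j * M k"
proof -
  define r where "r = norm q"
  define P where "P = qpoch (q ^ m) (q ^ m)"
  have x: "norm (q ^ m) < 1"
    using q m by (simp add: norm_power power_less_one_iff)
  have r: "0 \<le> r" "r \<le> 1"
    using q unfolding r_def by auto
  have "tri i + tri j \<le> nat (e i j)" "tri k \<le> m * (tri (Suc k) + j * k)"
    using e m by (auto simp: tri_Suc intro: order.trans[OF _ mult_le_mono1[of 1]])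
  then have "r ^ nat (e i j) * r ^ (m * (tri (Suc k) + j * k)) \<le> r ^ (tri i + tri j) * r ^ tri k"
    using r by (intro mult_mono power_decreasing) auto
  moreover have "norm (1 / P i) * norm (1 / P j) * norm (1 / P k)
      \<le> (1 / (1 - norm (q ^ m))) ^ i * (1 / (1 - norm (q ^ m))) ^ j * (1 / (1 - norm (q ^ m))) ^ k"
    unfolding P_def using x by (intro mult_mono norm_inverse_qpoch_same_le) auto
  ultimately have "(r ^ nat (e i j) * r ^ (m * (tri (Suc k) + j * k))) * (norm (1 / P i) * norm (1 / P j) * norm (1 / P k))
      \<le> (r ^ (tri i + tri j) * r ^ tri k) *
        ((1 / (1 - norm (q ^ m))) ^ i * (1 / (1 - norm (q ^ m))) ^ j * (1 / (1 - norm (q ^ m))) ^ k)"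
    by (rule mult_mono) (use r in auto)
  moreover have "norm (transformation_term q m e ((i, j), k)) =
      (r ^ nat (e i j) * r ^ (m * (tri (Suc k) + j * k))) * (norm (1 / P i) * norm (1 / P j) * norm (1 / P k))"
  proof -
    have "norm ((q ^ m) ^ n) = r ^ (m * n)" "norm (q ^ n) = r ^ n" for n
      unfolding r_def by (simp_all add: norm_power power_mult)
    then show ?thesis
      unfolding transformation_term_def P_def
      by (simp only: prod.case norm_mult norm_divide) (simp add: divide_inverse)
  qed
  ultimately show ?thesis
    unfolding M_def r_def by (simp add: power_add mult_ac)
qed

lemma summable_on_transformation_term:
  fixes q :: complex
  assumes q: "norm q < 1" and m: "0 < m" and e: "\<And>i j. int (tri i + tri j) \<le> e i j"
  shows "transformation_term q m e summable_on UNIV"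
proof -
  define M where "M n = norm q ^ tri n * (1 / (1 - norm (q ^ m))) ^ n" for n
  have x: "norm (q ^ m) < 1"
    using q m by (simp add: norm_power power_less_one_iff)
  have M_nonneg: "0 \<le> M n" for n
    unfolding M_def using x by simp
  have "summable (\<lambda>n. norm (M n))"
    unfolding M_def using q x by (simp add: summable_power_tri_mult_power)
  then have "M summable_on UNIV"
    by (rule norm_summable_imp_summable_on)
  then have "(\<lambda>(ab, c). (case ab of (a, b) \<Rightarrow> M a * M b) * M c) summable_on (UNIV \<times> UNIV) \<times> UNIV"
    using M_nonneg
    by (intro summable_on_product_nonneg) (auto intro: mult_nonneg_nonneg)
  then have "Infinite_Sum.abs_summable_on (\<lambda>((a, b), c). M a * M b * M c) UNIV"
    using M_nonneg by (simp add: case_prod_beta' abs_mult)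
  then have "Infinite_Sum.abs_summable_on (transformation_term q m e) UNIV"
  proof (rule Infinite_Sum.abs_summable_on_comparison_test)
    fix p :: "(nat \<times> nat) \<times> nat"
    obtain i j k where p: "p = ((i, j), k)"
      by (metis prod.collapse)
    show "norm (transformation_term q m e p) \<le> norm ((\<lambda>((a, b), c). M a * M b * M c) p)"
      using norm_transformation_term_le[where e = e and i = i and j = j and k = k, OF q m e]
        M_nonneg[of i] M_nonneg[of j] M_nonneg[of k]
      unfolding p by (simp add: M_def[symmetric] abs_mult)
  qed
  then show ?thesis
    by (rule Infinite_Sum.abs_summable_summable)
qed

lemma powi_eq_power_nat: "0 \<le> n \<Longrightarrow> (q :: complex) powi n = q ^ nat n"
  by (metis nat_0_le power_int_of_nat)

lemma infsum_transformation_term_fixed_ij: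
  fixes q :: complex
  assumes q: "norm q < 1" and m: "0 < m" and e: "0 \<le> e i j"
  shows "(\<Sum>\<^sub>\<infinity>k. transformation_term q m e ((i, j), k)) = qpoch_inf (- (q ^ m)) (q ^ m) *
      (q powi e i j / (qpoch (q ^ m) (q ^ m) i * qpoch (q ^ (2 * m)) (q ^ (2 * m)) j))"
proof -
  define x where "x = q ^ m"
  define P where "P = qpoch x x"
  have x: "norm x < 1"
    unfolding x_def using q m by (simp add: norm_power power_less_one_iff)
  have "((\<lambda>k. x ^ tri (Suc k) / P k * (x ^ j) ^ k) has_sum euler_series x (x ^ j)) UNIV"
    unfolding euler_series_def P_def
    by (intro norm_summable_imp_has_sum summable_sums summable_norm_euler_term[OF x]
        summable_norm_cancel)
  moreover have "transformation_term q m e ((i, j), k) =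
      q ^ nat (e i j) / (P i * P j) * (x ^ tri (Suc k) / P k * (x ^ j) ^ k)" for k
    unfolding transformation_term_def x_def[symmetric] P_def[symmetric]
    by (simp add: power_add power_mult mult.commute[of j])
  ultimately have "(\<Sum>\<^sub>\<infinity>k. transformation_term q m e ((i, j), k)) =
      q ^ nat (e i j) / (P i * P j) * euler_series x (x ^ j)"
    by (simp only: infsum_cmult_right' infsumI)
  moreover have "qpoch_inf (- x) x = qpoch (- x) x j * euler_series x (x ^ j)"
    using euler_product[OF x, of 1] euler_series_shift[OF x, of 1 j] by simp
  moreover have "qpoch (q ^ (2 * m)) (q ^ (2 * m)) j = P j * qpoch (- x) x j"
    unfolding P_def x_def by (simp add: power_mult qpoch_square mult.commute[of 2])
  moreover have "qpoch (- x) x j \<noteq> 0"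
    using qpoch_nonzero[of "- x" x j] x by simp
  ultimately show ?thesis
    unfolding x_def[symmetric] P_def[symmetric] by (simp add: powi_eq_power_nat[OF e] mult_ac)
qed

lemma sum_transformation_term_diagonal:
  fixes q :: complex
  assumes q: "norm q < 1" and m: "0 < m" and eR: "\<And>i j. 0 \<le> eR i j"
    and compat: "\<And>i j k. eR i j + int (m * (tri (Suc k) + j * k)) = eL (i + k) (j + k) + int (m * (i * j))"
  shows "(\<Sum>k\<le>min a b. transformation_term q m eR ((a - k, b - k), k)) =
      q powi eL a b / (qpoch (q ^ m) (q ^ m) a * qpoch (q ^ m) (q ^ m) b)"
proof -
  define x where "x = q ^ m"
  define P where "P = qpoch x x"
  have x: "norm x < 1"
    unfolding x_def using q m by (simp add: norm_power power_less_one_iff)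
  have eL: "0 \<le> eL a b"
  proof -
    define k where "k = min a b"
    have "(a - k) * (b - k) = 0" "a - k + k = a" "b - k + k = b"
      by (auto simp: k_def min_def)
    then have "eL a b = eR (a - k) (b - k) + int (m * (tri (Suc k) + (b - k) * k))"
      using compat[of "a - k" "b - k" k] by (simp only: mult_0_right of_nat_0 add_0_right)
    then show ?thesis
      using eR[of "a - k" "b - k"] of_nat_0_le_iff by linarith
  qed
  have "transformation_term q m eR ((a - k, b - k), k) =
      q ^ nat (eL a b) * (x ^ ((a - k) * (b - k)) / (P (a - k) * P (b - k) * P k))"
    if "k \<le> min a b" for k
  proof -
    have "int (nat (eR (a - k) (b - k)) + m * (tri (Suc k) + (b - k) * k)) =
        int (nat (eL a b) + m * ((a - k) * (b - k)))"
      using compat[of "a - k" "b - k" k] that eR[of "a - k" "b - k"] eL by simp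
    then have "nat (eR (a - k) (b - k)) + m * (tri (Suc k) + (b - k) * k) =
        nat (eL a b) + m * ((a - k) * (b - k))"
      by (simp only: of_nat_eq_iff)
    then have "q ^ nat (eR (a - k) (b - k)) * x ^ (tri (Suc k) + (b - k) * k) =
        q ^ nat (eL a b) * x ^ ((a - k) * (b - k))"
      unfolding x_def power_mult[symmetric] power_add[symmetric] by simp
    then show ?thesis
      unfolding transformation_term_def P_def x_def[symmetric] by simp
  qed
  then have "(\<Sum>k\<le>min a b. transformation_term q m eR ((a - k, b - k), k)) =
      q ^ nat (eL a b) * (\<Sum>k\<le>min a b. x ^ ((a - k) * (b - k)) / (P (a - k) * P (b - k) * P k))"
    by (simp add: sum_distrib_left)
  also have "\<dots> = q ^ nat (eL a b) / (P a * P b)"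
    unfolding P_def using durfee_identity[of x a b] power_Suc_neq_one[OF x] by simp
  finally show ?thesis
    unfolding powi_eq_power_nat[OF eL] P_def x_def .
qed

lemma q_series_transformation:
  fixes q :: complex and eL eR :: "nat \<Rightarrow> nat \<Rightarrow> int"
  assumes q: "norm q < 1" and m: "0 < m"
    and eR: "\<And>i j. int (tri i + tri j) \<le> eR i j"
    and compat: "\<And>i j k. eR i j + int (m * (tri (Suc k) + j * k)) = eL (i + k) (j + k) + int (m * (i * j))"
  shows "(\<Sum>\<^sub>\<infinity>(a, b)\<in>UNIV. q powi eL a b / (qpoch (q ^ m) (q ^ m) a * qpoch (q ^ m) (q ^ m) b)) =
    qpoch_inf (- (q ^ m)) (q ^ m) *
      (\<Sum>\<^sub>\<infinity>(i, j)\<in>UNIV. q powi eR i j / (qpoch (q ^ m) (q ^ m) i * qpoch (q ^ (2 * m)) (q ^ (2 * m)) j))"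
proof -
  define u where "u = transformation_term q m eR"
  define A where "A = Sigma (UNIV :: (nat \<times> nat) set) (\<lambda>(a, b). {..min a b})"
  define g where "g = (\<lambda>((a, b), k). ((a - k, b - k), k :: nat))"
  have eR_nonneg: "0 \<le> eR i j" for i j
    using eR[of i j] by linarith
  have u: "u summable_on UNIV"
    unfolding u_def using q m eR by (rule summable_on_transformation_term)
  have bij: "bij_betw g A UNIV"
    by (rule bij_betw_byWitness[where f' = "\<lambda>((i, j), k). ((i + k, j + k), k)"])
      (auto simp: A_def g_def)
  then have ug: "(\<lambda>p. u (g p)) summable_on A"
    using u by (simp add: summable_on_reindex_bij_betw)
  have "qpoch_inf (- (q ^ m)) (q ^ m) *
      (\<Sum>\<^sub>\<infinity>(i, j)\<in>UNIV. q powi eR i j / (qpoch (q ^ m) (q ^ m) i * qpoch (q ^ (2 * m)) (q ^ (2 * m)) j))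
      = (\<Sum>\<^sub>\<infinity>ij\<in>UNIV. \<Sum>\<^sub>\<infinity>k. u (ij, k))"
    unfolding infsum_cmult_right'[symmetric] u_def
    by (intro infsum_cong) (auto simp: infsum_transformation_term_fixed_ij[OF q m eR_nonneg])
  also have "\<dots> = infsum u UNIV"
    using infsum_Sigma'_banach[of "\<lambda>ij k. u (ij, k)" UNIV "\<lambda>_. UNIV"] u by simp
  also have "\<dots> = infsum (\<lambda>p. u (g p)) A"
    by (rule infsum_reindex_bij_betw[OF bij, symmetric])
  also have "\<dots> = (\<Sum>\<^sub>\<infinity>(a, b)\<in>UNIV. \<Sum>k\<le>min a b. u ((a - k, b - k), k))"
    using infsum_Sigma'_banach[of "\<lambda>ab k. u (g (ab, k))" UNIV "\<lambda>(a, b). {..min a b}"] ug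
    by (simp add: A_def g_def case_prod_beta')
  also have "\<dots> = (\<Sum>\<^sub>\<infinity>(a, b)\<in>UNIV. q powi eL a b / (qpoch (q ^ m) (q ^ m) a * qpoch (q ^ m) (q ^ m) b))"
    unfolding u_def using sum_transformation_term_diagonal[OF q m eR_nonneg compat] by simp
  finally show ?thesis ..
qed

lemma tri_le_square: "int (tri n) \<le> (int n)^2"
  using two_tri[of n] by (simp add: power2_eq_square algebra_simps)

lemma tri_eq_div: "(int n * (int n - 1)) div 2 = int (tri n)"
  by (simp flip: two_tri)

lemma tri_plus_double_eq_div: "(int n * (int n + 3)) div 2 = int (tri n) + 2 * int n"
proof -
  have "int n * (int n + 3) = 2 * (int (tri n) + 2 * int n)"
    using two_tri[of n] by (simp add: algebra_simps)
  then show ?thesis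
    by simp
qed

lemma S1_transformation:
  fixes q :: complex
  assumes q: "norm q < 1"
  shows "S1 q = qpoch_inf (- (q^3)) (q^3) *
           (\<Sum>\<^sub>\<infinity>(i,j)\<in>(UNIV :: (nat \<times> nat) set).
              q powi ((int i * (int i - 1)) div 2 + 2 * int i * int j + 2 * (int j)^2 + 2 * int j)
              / (qpoch (q^3) (q^3) i * qpoch (q^6) (q^6) j))"
proof -
  have "int (tri i + tri j) \<le> int (tri i) + 2 * int i * int j + 2 * (int j)^2 + 2 * int j" for i j :: nat
    using tri_le_square[of j] zero_le_mult_iff[of "int i" "int j"] by linarith
  moreover have "int (tri i) + 2 * int i * int j + 2 * (int j)^2 + 2 * int j + int (3 * (tri (Suc k) + j * k))
      = int (tri (i + k)) - int (i + k) * int (j + k) + 2 * (int (j + k))^2 + 2 * int (j + k) + int (3 * (i * j))"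
    for i j k :: nat
    using two_tri[of k] by (simp add: tri_add tri_Suc power2_eq_square algebra_simps)
  ultimately show ?thesis
    unfolding S1_def tri_eq_div
    using q_series_transformation[OF q, of 3
        "\<lambda>i j. int (tri i) + 2 * int i * int j + 2 * (int j)^2 + 2 * int j"
        "\<lambda>a b. int (tri a) - int a * int b + 2 * (int b)^2 + 2 * int b"]
    by simp
qed

lemma S2_transformation:
  fixes q :: complex
  assumes q: "norm q < 1"
  shows "S2 q = qpoch_inf (- (q^3)) (q^3) *
           (\<Sum>\<^sub>\<infinity>(i,j)\<in>(UNIV :: (nat \<times> nat) set).
              q powi ((int i * (int i + 3)) div 2 + 2 * int i * int j + 2 * (int j)^2)
              / (qpoch (q^3) (q^3) i * qpoch (q^6) (q^6) j))"
proof -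
  have "int (tri i + tri j) \<le> int (tri i) + 2 * int i + 2 * int i * int j + 2 * (int j)^2" for i j :: nat
    using tri_le_square[of j] zero_le_mult_iff[of "int i" "int j"] by linarith
  moreover have "int (tri i) + 2 * int i + 2 * int i * int j + 2 * (int j)^2 + int (3 * (tri (Suc k) + j * k))
      = int (tri (i + k)) + 2 * int (i + k) - int (i + k) * int (j + k) + 2 * (int (j + k))^2 + int (3 * (i * j))"
    for i j k :: nat
    using two_tri[of k] by (simp add: tri_add tri_Suc power2_eq_square algebra_simps)
  ultimately show ?thesis
    unfolding S2_def tri_plus_double_eq_div
    using q_series_transformation[OF q, of 3
        "\<lambda>i j. int (tri i) + 2 * int i + 2 * int i * int j + 2 * (int j)^2"
        "\<lambda>a b. int (tri a) + 2 * int a - int a * int b + 2 * (int b)^2"]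
    by (simp add: add.assoc)
qed

theorem mainTheorem4:
  fixes q :: complex
  assumes "norm q < 1"
  shows "(S1 q = qpoch_inf (- (q^3)) (q^3) *
           (\<Sum>\<^sub>\<infinity>(i,j)\<in>(UNIV :: (nat \<times> nat) set).
              q powi ((int i * (int i - 1)) div 2 + 2 * int i * int j + 2 * (int j)^2 + 2 * int j)
              / (qpoch (q^3) (q^3) i * qpoch (q^6) (q^6) j)))
    \<and> (S2 q = qpoch_inf (- (q^3)) (q^3) *
           (\<Sum>\<^sub>\<infinity>(i,j)\<in>(UNIV :: (nat \<times> nat) set).
              q powi ((int i * (int i + 3)) div 2 + 2 * int i * int j + 2 * (int j)^2)
              / (qpoch (q^3) (q^3) i * qpoch (q^6) (q^6) j)))"
  using S1_transformation[OF assms] S2_transformation[OF assms] by simp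

end
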